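(* Let $K_{A_1,B_1},\ldots,K_{A_q,B_q}$ be demand graphs with $|A_i|=\alpha$, $|B_i|=\beta$, reordered such that $\mathrm{mincut}_G(K_{A_1,B_1})< \ldots < \mathrm{mincut}_G(K_{A_q,B_q})$. Then the polynomials $P_{1}, \ldots, P_{q}$ are linearly independent.
   Context: $G=(V,E,w)$ is an undirected edge-weighted graph. For a partition $\Pi$ of $V$, $\Pi(v)$ is the part containing $v$, and $\mathrm{cut}_G(\Pi)=\sum_{uv\in E:\Pi(u)\neq\Pi(v)} w(uv)$. A partition agrees with a demand graph $D$ if every $uv\in D$ has $\Pi(u)\neq\Pi(v)$, and $\mathrm{mincut}_G(D)$ is the minimum of $\mathrm{cut}_G(\Pi)$ over partitions agreeing with $D$. For disjoint $A,B\subseteq V$, $K_{A,B}$ is the complete bipartite demand graph between $A$ and $B$; an optimal partition may be assumed to have two parts. Each vertex $v$ gets a variable $\phi_v$; a two-part partition $\{U,V\setminus U\}$ is viewed as a $0/1$ vector in $\{0,1\}^n$ at which polynomials are evaluated over $\mathbb{F}_2$. For each $j$, fix $a_j\in A_j$, $b_j\in B_j$ and define $P_j=\prod_{b\in B_j}(\phi_{a_j}-\phi_b)\cdot\prod_{a\in A_j\setminus\{a_j\}}(\phi_a-\phi_{b_j})$, a polynomial of degree $\alpha+\beta-1$. A two-part partition agrees with $K_{A_j,B_j}$ iff $P_j$ evaluated at it is nonzero. *)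

theory Defs
  imports Complex_Main "HOL-Library.Poly_Mapping" "HOL-Library.Z2" "HOL-Library.Disjoint_Sets"
begin

definition graph_wf :: "'v set \<Rightarrow> 'v set set \<Rightarrow> ('v set \<Rightarrow> real) \<Rightarrow> bool" where
  "graph_wf V E w \<longleftrightarrow> finite V \<and>
     E \<subseteq> {e. \<exists>u v. u \<in> V \<and> v \<in> V \<and> u \<noteq> v \<and> e = {u, v}} \<and>
     (\<forall>e\<in>E. w e \<ge> 0)"

definition part_of :: "'v set set \<Rightarrow> 'v \<Rightarrow> 'v set" where
  "part_of P v = (THE X. X \<in> P \<and> v \<in> X)"

definition cut_val :: "'v set set \<Rightarrow> ('v set \<Rightarrow> real) \<Rightarrow> 'v set set \<Rightarrow> real" where
  "cut_val E w P = (\<Sum>e\<in>E. if (\<exists>u v. e = {u, v} \<and> part_of P u \<noteq> part_of P v) then w e else 0)"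

text \<open>Demand graph D given as a set of vertex pairs.\<close>
definition agrees :: "'v set set \<Rightarrow> ('v \<times> 'v) set \<Rightarrow> bool" where
  "agrees P D \<longleftrightarrow> (\<forall>(u, v)\<in>D. part_of P u \<noteq> part_of P v)"

definition mincut :: "'v set \<Rightarrow> 'v set set \<Rightarrow> ('v set \<Rightarrow> real) \<Rightarrow> ('v \<times> 'v) set \<Rightarrow> real" where
  "mincut V E w D = Min {cut_val E w P | P. partition_on V P \<and> agrees P D}"

definition K_bip :: "'v set \<Rightarrow> 'v set \<Rightarrow> ('v \<times> 'v) set" where
  "K_bip A B = A \<times> B"

text \<open>Multivariate polynomials over F_2 (type bit) in variables indexed by vertices.\<close>
type_synonym 'v mpoly2 = "('v \<Rightarrow>\<^sub>0 nat) \<Rightarrow>\<^sub>0 bit"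

definition Var2 :: "'v \<Rightarrow> 'v mpoly2" where
  "Var2 v = Poly_Mapping.single (Poly_Mapping.single v 1) 1"

definition Const2 :: "bit \<Rightarrow> 'v mpoly2" where
  "Const2 c = Poly_Mapping.single 0 c"

definition P_poly :: "'v set \<Rightarrow> 'v set \<Rightarrow> 'v \<Rightarrow> 'v \<Rightarrow> 'v mpoly2" where
  "P_poly A B a b = (\<Prod>y\<in>B. Var2 a - Var2 y) * (\<Prod>x\<in>A - {a}. Var2 x - Var2 b)"

end

theory Submission
  imports Defs
begin

text \<open>
  Fix \<open>j\<close> and let \<open>U\<close> be the side containing \<open>A j\<close> of an optimal two-part
  partition for the demand \<open>K(A j, B j)\<close>. At the indicator vector of \<open>U\<close> the
  polynomial \<open>P j\<close> takes the value 1. If \<open>P i\<close> with \<open>i > j\<close> were nonzero there,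
  \<open>U\<close> would also separate \<open>A i\<close> from \<open>B i\<close>, whence
  \<open>mincut K(A i, B i) \<le> mincut K(A j, B j)\<close>, against the ordering. So the matrix of
  these evaluations is triangular with unit diagonal, and the polynomials are
  linearly independent.
\<close>

definition eval_monom :: "('v \<Rightarrow> 'a::comm_monoid_mult) \<Rightarrow> ('v \<Rightarrow>\<^sub>0 nat) \<Rightarrow> 'a" where
  "eval_monom f m = (\<Prod>v\<in>Poly_Mapping.keys m. f v ^ Poly_Mapping.lookup m v)"

lemma eval_monom_eq_prod:
  assumes "finite S" "Poly_Mapping.keys m \<subseteq> S"
  shows "eval_monom f m = (\<Prod>v\<in>S. f v ^ Poly_Mapping.lookup m v)"
  unfolding eval_monom_def using assms by (intro prod.mono_neutral_left) (auto simp: in_keys_iff)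

lemma eval_monom_zero [simp]: "eval_monom f 0 = 1"
  by (simp add: eval_monom_def)

lemma eval_monom_add: "eval_monom f (m + n) = eval_monom f m * eval_monom f n"
proof -
  let ?S = "Poly_Mapping.keys m \<union> Poly_Mapping.keys n"
  have "eval_monom f (m + n) = (\<Prod>v\<in>?S. f v ^ Poly_Mapping.lookup (m + n) v)"
    by (rule eval_monom_eq_prod) (auto simp: in_keys_iff lookup_add)
  also have "\<dots> = (\<Prod>v\<in>?S. f v ^ Poly_Mapping.lookup m v) * (\<Prod>v\<in>?S. f v ^ Poly_Mapping.lookup n v)"
    by (simp add: lookup_add power_add prod.distrib)
  also have "\<dots> = eval_monom f m * eval_monom f n"
    by (simp add: eval_monom_eq_prod[of ?S])
  finally show ?thesis .
qed

definition eval_mpoly :: "('v \<Rightarrow> 'a::comm_semiring_1) \<Rightarrow> (('v \<Rightarrow>\<^sub>0 nat) \<Rightarrow>\<^sub>0 'a) \<Rightarrow> 'a" where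
  "eval_mpoly f p = (\<Sum>m\<in>Poly_Mapping.keys p. Poly_Mapping.lookup p m * eval_monom f m)"

lemma eval_mpoly_zero [simp]: "eval_mpoly f 0 = 0"
  by (simp add: eval_mpoly_def)

lemma eval_mpoly_single [simp]: "eval_mpoly f (Poly_Mapping.single m c) = c * eval_monom f m"
  by (cases "c = 0") (simp_all add: eval_mpoly_def)

lemma eval_mpoly_add: "eval_mpoly f (p + q) = eval_mpoly f p + eval_mpoly f q"
  unfolding eval_mpoly_def by (rule setsum_keys_plus_distrib) (simp_all add: distrib_right)

lemma eval_mpoly_sum: "eval_mpoly f (sum p I) = (\<Sum>i\<in>I. eval_mpoly f (p i))"
  by (induction I rule: infinite_finite_induct) (simp_all add: eval_mpoly_add)

lemma mpoly_eq_sum_single: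
  "p = (\<Sum>m\<in>Poly_Mapping.keys p. Poly_Mapping.single m (Poly_Mapping.lookup p m))"
  by (rule poly_mapping_eqI) (simp add: lookup_sum lookup_single when_def in_keys_iff)

lemma eval_mpoly_mult: "eval_mpoly f (p * q) = eval_mpoly f p * eval_mpoly f q"
proof -
  let ?c = "Poly_Mapping.lookup p" and ?d = "Poly_Mapping.lookup q"
  have "p * q = (\<Sum>m\<in>Poly_Mapping.keys p. \<Sum>n\<in>Poly_Mapping.keys q.
                  Poly_Mapping.single (m + n) (?c m * ?d n))"
    by (subst mpoly_eq_sum_single[of p], subst mpoly_eq_sum_single[of q])
       (simp add: sum_product mult_single)
  then have "eval_mpoly f (p * q) = (\<Sum>m\<in>Poly_Mapping.keys p. \<Sum>n\<in>Poly_Mapping.keys q.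
                  (?c m * eval_monom f m) * (?d n * eval_monom f n))"
    by (simp add: eval_mpoly_sum eval_monom_add mult_ac)
  then show ?thesis
    by (simp add: eval_mpoly_def sum_product)
qed

lemma eval_mpoly_one [simp]: "eval_mpoly f 1 = 1"
  using eval_mpoly_single[of f 0 1] by simp

lemma eval_mpoly_prod: "eval_mpoly f (prod p I) = (\<Prod>i\<in>I. eval_mpoly f (p i))"
  by (induction I rule: infinite_finite_induct) (simp_all add: eval_mpoly_mult)

lemma eval_mpoly_diff:
  fixes f :: "'v \<Rightarrow> 'a::comm_ring_1"
  shows "eval_mpoly f (p - q) = eval_mpoly f p - eval_mpoly f q"
  using eval_mpoly_add[of f "p - q" q] by (simp add: eq_diff_eq)

lemma eval_mpoly_Var2 [simp]: "eval_mpoly f (Var2 v) = f v"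
  by (simp add: Var2_def eval_monom_def)

lemma eval_mpoly_P_poly:
  "eval_mpoly f (P_poly A B a b) = (\<Prod>y\<in>B. f a - f y) * (\<Prod>x\<in>A - {a}. f x - f b)"
  by (simp add: P_poly_def eval_mpoly_mult eval_mpoly_prod eval_mpoly_diff)

text \<open>
  Induction on \<open>j\<close>: at the evaluation point of \<open>p j\<close> the earlier terms vanish
  by induction and the later ones by triangularity.
\<close>
lemma combination_eq_zero_imp_coeffs_zero:
  fixes p :: "nat \<Rightarrow> ('v \<Rightarrow>\<^sub>0 nat) \<Rightarrow>\<^sub>0 'a::idom"
  assumes triangular: "\<And>j. j < q \<Longrightarrow>
      \<exists>f. eval_mpoly f (p j) \<noteq> 0 \<and> (\<forall>i. j < i \<and> i < q \<longrightarrow> eval_mpoly f (p i) = 0)"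
    and combination: "(\<Sum>j<q. Poly_Mapping.single 0 (c j) * p j) = 0"
    and "j < q"
  shows "c j = 0"
  using \<open>j < q\<close>
proof (induction j rule: less_induct)
  case (less j)
  obtain f where f_j: "eval_mpoly f (p j) \<noteq> 0"
    and f_above: "\<And>i. j < i \<Longrightarrow> i < q \<Longrightarrow> eval_mpoly f (p i) = 0"
    using triangular[OF less.prems] by blast
  have other_terms: "c i * eval_mpoly f (p i) = 0" if "i \<in> {..<q} - {j}" for i
    using that less.IH less.prems f_above by (cases "i < j") auto
  have "0 = eval_mpoly f (\<Sum>i<q. Poly_Mapping.single 0 (c i) * p i)"
    by (simp add: combination)
  also have "\<dots> = (\<Sum>i<q. c i * eval_mpoly f (p i))"
    by (simp add: eval_mpoly_sum eval_mpoly_mult)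
  also have "\<dots> = c j * eval_mpoly f (p j)"
    using less.prems other_terms by (simp add: sum.remove[of "{..<q}" j] sum.neutral)
  finally show ?case
    using f_j by simp
qed

lemma part_of_eq:
  assumes "partition_on V P" "X \<in> P" "v \<in> X"
  shows "part_of P v = X"
  unfolding part_of_def
proof (rule the_equality)
  show "X \<in> P \<and> v \<in> X" using assms by auto
next
  fix Y assume "Y \<in> P \<and> v \<in> Y"
  then show "Y = X" using assms unfolding partition_on_def disjoint_def by blast
qed

lemma part_of_in:
  assumes "partition_on V P" "v \<in> V"
  shows "part_of P v \<in> P" "v \<in> part_of P v"
proof -
  obtain X where "X \<in> P" "v \<in> X" using assms partition_onD1 by blast
  then show "part_of P v \<in> P" "v \<in> part_of P v" using part_of_eq[OF assms(1)] by simp_all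
qed

lemma partition_on_two_sides:
  "U \<subseteq> V \<Longrightarrow> U \<noteq> {} \<Longrightarrow> V - U \<noteq> {} \<Longrightarrow> partition_on V {U, V - U}"
  by (auto simp: partition_on_def disjoint_def)

lemma part_of_two_sides_eq_iff:
  assumes "U \<subseteq> V" "U \<noteq> {}" "V - U \<noteq> {}" "u \<in> V" "v \<in> V"
  shows "part_of {U, V - U} u = part_of {U, V - U} v \<longleftrightarrow> (u \<in> U \<longleftrightarrow> v \<in> U)"
proof -
  have "part_of {U, V - U} x = (if x \<in> U then U else V - U)" if "x \<in> V" for x
    using that part_of_eq[OF partition_on_two_sides[OF assms(1-3)]] by simp
  then show ?thesis
    using assms by auto
qed

definition separates :: "'v set \<Rightarrow> 'v set \<Rightarrow> 'v set \<Rightarrow> bool" where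
  "separates U A B \<longleftrightarrow> (\<forall>x\<in>A. \<forall>y\<in>B. x \<in> U \<longleftrightarrow> y \<notin> U)"

lemma agrees_two_sides_K_bip:
  assumes "U \<subseteq> V" "U \<noteq> {}" "V - U \<noteq> {}" "A \<subseteq> V" "B \<subseteq> V" "separates U A B"
  shows "agrees {U, V - U} (K_bip A B)"
  using assms part_of_two_sides_eq_iff[OF assms(1-3)]
  unfolding agrees_def K_bip_def separates_def by blast

lemma finite_cut_values:
  assumes "finite V"
  shows "finite {cut_val E w P | P. partition_on V P \<and> agrees P D}"
proof (rule finite_subset)
  show "{cut_val E w P | P. partition_on V P \<and> agrees P D} \<subseteq> cut_val E w ` Pow (Pow V)"
    by (auto dest: partition_onD1)
qed (use assms in simp)

lemma mincut_le_cut_val: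
  assumes "finite V" "partition_on V P" "agrees P D"
  shows "mincut V E w D \<le> cut_val E w P"
  unfolding mincut_def using assms by (intro Min_le finite_cut_values) auto

lemma mincut_attained:
  assumes "finite V" "partition_on V P" "agrees P D"
  obtains P' where "partition_on V P'" "agrees P' D" "cut_val E w P' = mincut V E w D"
proof -
  have "{cut_val E w P | P. partition_on V P \<and> agrees P D} \<noteq> {}"
    using assms(2,3) by blast
  from Min_in[OF finite_cut_values[OF assms(1)] this] that show ?thesis
    unfolding mincut_def by auto
qed

lemma mincut_K_bip_le_cut_two_sides:
  assumes "finite V" "U \<subseteq> V" "U \<noteq> {}" "V - U \<noteq> {}" "A \<subseteq> V" "B \<subseteq> V" "separates U A B"
  shows "mincut V E w (K_bip A B) \<le> cut_val E w {U, V - U}"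
  using assms by (intro mincut_le_cut_val partition_on_two_sides agrees_two_sides_K_bip)

text \<open>Merging parts never increases the cut, because edge weights are nonnegative.\<close>
lemma cut_val_two_sides_le:
  assumes g: "graph_wf V E w" and P: "partition_on V P"
    and U: "U \<subseteq> V" "U \<noteq> {}" "V - U \<noteq> {}"
    and union_of_parts: "\<And>u v. u \<in> V \<Longrightarrow> v \<in> V \<Longrightarrow> part_of P u = part_of P v \<Longrightarrow> u \<in> U \<longleftrightarrow> v \<in> U"
  shows "cut_val E w {U, V - U} \<le> cut_val E w P"
  unfolding cut_val_def
proof (rule sum_mono)
  fix e assume e: "e \<in> E"
  have "w e \<ge> 0"
    using g e by (simp add: graph_wf_def)
  have "e \<subseteq> V"
    using g e unfolding graph_wf_def by auto
  have crossing: "part_of P u \<noteq> part_of P v"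
    if "e = {u, v}" "part_of {U, V - U} u \<noteq> part_of {U, V - U} v" for u v
  proof -
    have "u \<in> V" "v \<in> V" using \<open>e \<subseteq> V\<close> that(1) by auto
    then have "\<not> (u \<in> U \<longleftrightarrow> v \<in> U)"
      using that(2) part_of_two_sides_eq_iff[OF U] by simp
    then show ?thesis
      using union_of_parts \<open>u \<in> V\<close> \<open>v \<in> V\<close> by blast
  qed
  show "(if \<exists>u v. e = {u, v} \<and> part_of {U, V - U} u \<noteq> part_of {U, V - U} v then w e else 0)
      \<le> (if \<exists>u v. e = {u, v} \<and> part_of P u \<noteq> part_of P v then w e else 0)"
    (is "(if ?crosses_U then _ else _) \<le> (if ?crosses_P then _ else _)")
  proof (cases ?crosses_U)
    case True
    then obtain u v where uv: "e = {u, v}" "part_of {U, V - U} u \<noteq> part_of {U, V - U} v"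
      by blast
    have ?crosses_P
      using uv(1) crossing[OF uv] by blast
    with True show ?thesis
      by (simp only: if_P order_refl)
  next
    case False
    then show ?thesis
      using \<open>w e \<ge> 0\<close> by (cases ?crosses_P) (simp_all only: if_P if_not_P if_False order_refl)
  qed
qed

lemma mincut_K_bip_attained_by_side:
  assumes g: "graph_wf V E w"
    and AB: "A \<subseteq> V" "B \<subseteq> V" "A \<inter> B = {}" "A \<noteq> {}" "B \<noteq> {}"
  obtains U where "A \<subseteq> U" "U \<subseteq> V" "U \<inter> B = {}"
    "cut_val E w {U, V - U} = mincut V E w (K_bip A B)"
proof -
  have fin: "finite V" using g by (simp add: graph_wf_def)
  have "V - A \<noteq> {}"
    using AB by blast
  then have "partition_on V {A, V - A}" "agrees {A, V - A} (K_bip A B)"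
    using AB by (auto simp: separates_def intro!: partition_on_two_sides agrees_two_sides_K_bip)
  then obtain P where P: "partition_on V P" "agrees P (K_bip A B)"
    and P_opt: "cut_val E w P = mincut V E w (K_bip A B)"
    by (rule mincut_attained[OF fin])
  define U where "U = {v \<in> V. part_of P v \<inter> A \<noteq> {}}"
  have same_part: "part_of P u = part_of P v" if "u \<in> V" "v \<in> part_of P u" for u v
    using part_of_eq[OF P(1) part_of_in(1)[OF P(1) that(1)] that(2)] by simp
  have "A \<subseteq> U"
    using AB part_of_in(2)[OF P(1)] unfolding U_def by blast
  moreover have "U \<subseteq> V"
    unfolding U_def by blast
  moreover have "U \<inter> B = {}"
  proof (rule ccontr)
    assume "U \<inter> B \<noteq> {}"
    then obtain x y where "y \<in> B" "y \<in> V" "x \<in> A" "x \<in> part_of P y"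
      unfolding U_def by blast
    then show False
      using P(2) same_part unfolding agrees_def K_bip_def by fastforce
  qed
  moreover have "U \<noteq> {}" "V - U \<noteq> {}"
    using calculation AB by blast+
  moreover have "cut_val E w {U, V - U} \<le> cut_val E w P"
    using calculation by (intro cut_val_two_sides_le[OF g P(1)]) (auto simp: U_def)
  moreover have "mincut V E w (K_bip A B) \<le> cut_val E w {U, V - U}"
    using calculation AB
    by (intro mincut_K_bip_le_cut_two_sides[OF fin]) (auto simp: separates_def)
  ultimately show ?thesis
    using that P_opt by simp
qed

lemma separating_side_of_min_cut:
  assumes g: "graph_wf V E w"
    and AB: "A \<subseteq> V" "B \<subseteq> V" "A \<inter> B = {}" "A \<noteq> {}" "B \<noteq> {}"
  obtains U where "separates U A B"
    "\<And>A' B'. A' \<subseteq> V \<Longrightarrow> B' \<subseteq> V \<Longrightarrow> separates U A' B' \<Longrightarrow>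
       mincut V E w (K_bip A' B') \<le> mincut V E w (K_bip A B)"
proof -
  have fin: "finite V" using g by (simp add: graph_wf_def)
  obtain U where U: "A \<subseteq> U" "U \<subseteq> V" "U \<inter> B = {}"
    and U_opt: "cut_val E w {U, V - U} = mincut V E w (K_bip A B)"
    by (rule mincut_K_bip_attained_by_side[OF g AB])
  have "U \<noteq> {}" "V - U \<noteq> {}"
    using U AB by blast+
  show ?thesis
  proof (rule that)
    show "separates U A B"
      using U unfolding separates_def by blast
  next
    fix A' B' assume "A' \<subseteq> V" "B' \<subseteq> V" "separates U A' B'"
    from mincut_K_bip_le_cut_two_sides[where E = E and w = w, OF fin U(2) \<open>U \<noteq> {}\<close> \<open>V - U \<noteq> {}\<close> this]
    show "mincut V E w (K_bip A' B') \<le> mincut V E w (K_bip A B)"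
      by (simp only: U_opt)
  qed
qed

lemma prod_of_bool:
  "finite I \<Longrightarrow> (\<Prod>i\<in>I. of_bool (Q i) :: 'a::comm_semiring_1) = of_bool (\<forall>i\<in>I. Q i)"
  by (induction I rule: finite_induct) simp_all

lemma eval_P_poly_side_indicator:
  assumes "finite A" "finite B" "a \<in> A" "b \<in> B"
  shows "eval_mpoly (\<lambda>v. of_bool (v \<in> U)) (P_poly A B a b) = (of_bool (separates U A B) :: bit)"
proof -
  have diff: "of_bool P - of_bool Q = (of_bool (P \<noteq> Q) :: bit)" for P Q
    by (cases P; cases Q) simp_all
  have "separates U A B \<longleftrightarrow> (\<forall>y\<in>B. a \<in> U \<longleftrightarrow> y \<notin> U) \<and> (\<forall>x\<in>A - {a}. x \<in> U \<longleftrightarrow> b \<notin> U)"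
    using assms(3,4) unfolding separates_def by blast
  then show ?thesis
    using assms(1,2) by (simp add: eval_mpoly_P_poly diff prod_of_bool flip: of_bool_conj)
qed

lemma P_poly_evaluations_triangular:
  assumes g: "graph_wf V E w"
    and AB: "\<And>j. j < q \<Longrightarrow> A j \<subseteq> V \<and> B j \<subseteq> V \<and> A j \<inter> B j = {}"
    and ab: "\<And>j. j < q \<Longrightarrow> a j \<in> A j \<and> b j \<in> B j"
    and increasing: "\<And>i j. i < j \<Longrightarrow> j < q \<Longrightarrow>
           mincut V E w (K_bip (A i) (B i)) < mincut V E w (K_bip (A j) (B j))"
    and "j < q"
  shows "\<exists>f. eval_mpoly f (P_poly (A j) (B j) (a j) (b j)) \<noteq> 0 \<and>
      (\<forall>i. j < i \<and> i < q \<longrightarrow> eval_mpoly f (P_poly (A i) (B i) (a i) (b i)) = 0)"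
proof -
  have "finite V"
    using g by (simp add: graph_wf_def)
  then have fin_AB: "finite (A i)" "finite (B i)" if "i < q" for i
    using AB[OF that] by (auto intro: finite_subset)
  have AB_j: "A j \<subseteq> V" "B j \<subseteq> V" "A j \<inter> B j = {}" "A j \<noteq> {}" "B j \<noteq> {}"
    using AB[OF \<open>j < q\<close>] ab[OF \<open>j < q\<close>] by auto
  obtain U where "separates U (A j) (B j)"
    and bound: "\<And>A' B'. A' \<subseteq> V \<Longrightarrow> B' \<subseteq> V \<Longrightarrow> separates U A' B' \<Longrightarrow>
      mincut V E w (K_bip A' B') \<le> mincut V E w (K_bip (A j) (B j))"
    using separating_side_of_min_cut[OF g AB_j] by blast
  moreover have "\<not> separates U (A i) (B i)" if "j < i" "i < q" for i
  proof
    assume "separates U (A i) (B i)"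
    then have "mincut V E w (K_bip (A i) (B i)) \<le> mincut V E w (K_bip (A j) (B j))"
      using bound AB[OF \<open>i < q\<close>] by simp
    with increasing[OF that] show False
      by linarith
  qed
  ultimately show ?thesis
    using fin_AB ab \<open>j < q\<close>
    by (intro exI[of _ "\<lambda>v. of_bool (v \<in> U)"]) (simp add: eval_P_poly_side_indicator)
qed

theorem lemma6:
  fixes V :: "'v set" and E :: "'v set set" and w :: "'v set \<Rightarrow> real"
    and q \<alpha> \<beta> :: nat and A B :: "nat \<Rightarrow> 'v set" and a b :: "nat \<Rightarrow> 'v"
  assumes "graph_wf V E w"
    and "\<And>j. j < q \<Longrightarrow> A j \<subseteq> V \<and> B j \<subseteq> V \<and> A j \<inter> B j = {}"
    and "\<And>j. j < q \<Longrightarrow> card (A j) = \<alpha> \<and> card (B j) = \<beta>"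
    and "\<And>j. j < q \<Longrightarrow> a j \<in> A j \<and> b j \<in> B j"
    and "\<And>i j. i < j \<Longrightarrow> j < q \<Longrightarrow>
           mincut V E w (K_bip (A i) (B i)) < mincut V E w (K_bip (A j) (B j))"
  shows "\<forall>c :: nat \<Rightarrow> bit.
           (\<Sum>j<q. Const2 (c j) * P_poly (A j) (B j) (a j) (b j)) = 0 \<longrightarrow> (\<forall>j<q. c j = 0)"
proof (intro allI impI)
  fix c :: "nat \<Rightarrow> bit" and j
  assume "(\<Sum>j<q. Const2 (c j) * P_poly (A j) (B j) (a j) (b j)) = 0" and "j < q"
  then have "(\<Sum>j<q. Poly_Mapping.single 0 (c j) * P_poly (A j) (B j) (a j) (b j)) = 0"
    unfolding Const2_def by blast
  with \<open>j < q\<close> show "c j = 0"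
    by (intro combination_eq_zero_imp_coeffs_zero[OF P_poly_evaluations_triangular[OF assms(1,2,4,5)]])
qed

end
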